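(* Let $\theta>1$, $r\in(\theta^{-1},\theta^{-1/2}]$ and $s=\max\big(1,\frac{\ln\theta}{\ln(r\theta)}-2\big)$. Suppose the random price sequence has maximum $P^*=p^*$ almost surely for a fixed $p^*\in[1,\theta]$, and let $Y$ be a random prediction with values in $[1,\theta]$. Then \[ \frac{\mathbb{E}[\mathsf{A}^1_r(P,Y)]}{\mathbb{E}[P^*]}\ \ge\ \frac{1}{r\theta}\,\Lambda(p^* ),\qquad \Lambda(p^* ):=\mathbb{E}\big[\mathcal{E}(p^*,Y)^{s}\big]. \]
   Context: One-max search: fix $\theta>1$. Prices $p_1,\dots,p_n\in[1,\theta]$ are revealed one at a time; the algorithm receives at the start a prediction $y\in[1,\theta]$ of the maximum price. At each step it irrevocably accepts the current price (payoff = that price) or rejects it; if nothing is accepted the payoff is $1$. Let $\varphi_r(z)=\frac{r\theta-1}{1-r}+\frac{1-r^2\theta}{1-r}\cdot\frac{z}{r\theta}$ and $\Phi^1_r(z)=\max(r\theta,\varphi_r(z))$; $\mathsf{A}^1_r$ accepts the first price $p_i\ge\Phi^1_r(y)$, and $\mathsf{A}^1_r(P,Y)$ is its payoff on the realized (random) prices and prediction. $\mathcal{E}(a,b)=\min\{a/b,b/a\}$. *)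

theory Defs
  imports "HOL-Probability.Probability"
begin

definition phi_r :: "real \<Rightarrow> real \<Rightarrow> real \<Rightarrow> real" where
  "phi_r \<theta> r z = (r*\<theta> - 1)/(1 - r) + (1 - r^2*\<theta>)/(1 - r) * (z/(r*\<theta>))"

definition Phi1 :: "real \<Rightarrow> real \<Rightarrow> real \<Rightarrow> real" where
  "Phi1 \<theta> r z = max (r*\<theta>) (phi_r \<theta> r z)"

definition A1 :: "real \<Rightarrow> real \<Rightarrow> real \<Rightarrow> real list \<Rightarrow> real" where
  "A1 \<theta> r y ps = (case find (\<lambda>p. Phi1 \<theta> r y \<le> p) ps of None \<Rightarrow> 1 | Some p \<Rightarrow> p)"

definition Eff :: "real \<Rightarrow> real \<Rightarrow> real" where
  "Eff a b = min (a/b) (b/a)"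

end

theory Submission
  imports Defs
begin

(* Write a = r theta. The threshold is max(a, phi(y)) with phi affine and nondecreasing,
   phi(a) = a and phi(theta) = 1/r = theta/a. On the almost sure event that the best price is p*,
   compare the payoff with p* E(p*,y)^s / a. If p* reaches the threshold, the payoff is at least
   phi(y) >= y/a >= p* E / a. If p* <= a, the payoff 1 suffices. Otherwise a < p* < phi(y), which
   forces y > a, and p* E^s <= p*^(1+s) / y^s <= phi(y)^(1+s) / y^s <= a. The last step holds
   because an affine map with nonnegative coefficients is log-convex in log y (Hoelder for two
   terms), so phi stays below the geometric interpolation a^(1-t) (theta/a)^t of its endpoint
   values, and s is chosen so that theta <= a^(2+s). Integrating, with E[P*] = p*, gives the
   claim. *)

lemma Youngs_inequality_nonneg:
  fixes x y t :: real
  assumes "0 \<le> x" "0 \<le> y" "0 \<le> t" "t \<le> 1"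
  shows "x powr (1 - t) * y powr t \<le> (1 - t) * x + t * y"
proof (cases "x = 0 \<or> y = 0")
  case True
  then show ?thesis using assms by auto
next
  case False
  then show ?thesis using assms by (intro Youngs_inequality_0) auto
qed

lemma weighted_geometric_mean_superadditive:
  fixes a1 a2 b1 b2 t :: real
  assumes "0 \<le> a1" "0 \<le> a2" "0 \<le> b1" "0 \<le> b2" "0 < a1 + b1" "0 < a2 + b2"
    and "0 \<le> t" "t \<le> 1"
  shows "a1 powr (1 - t) * a2 powr t + b1 powr (1 - t) * b2 powr t
         \<le> (a1 + b1) powr (1 - t) * (a2 + b2) powr t"
proof -
  define R where "R = (a1 + b1) powr (1 - t) * (a2 + b2) powr t"
  have R_pos: "0 < R" using assms unfolding R_def by simp
  have scale: "u powr (1 - t) * v powr t / R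
      = (u / (a1 + b1)) powr (1 - t) * (v / (a2 + b2)) powr t" if "0 \<le> u" "0 \<le> v" for u v
    using that assms unfolding R_def by (simp add: powr_divide)
  have "(a1 powr (1 - t) * a2 powr t + b1 powr (1 - t) * b2 powr t) / R
      \<le> ((1 - t) * (a1 / (a1 + b1)) + t * (a2 / (a2 + b2)))
        + ((1 - t) * (b1 / (a1 + b1)) + t * (b2 / (a2 + b2)))"
    unfolding add_divide_distrib scale[OF assms(1,2)] scale[OF assms(3,4)]
    using assms by (intro add_mono Youngs_inequality_nonneg) auto
  also have "\<dots> = (1 - t) * (a1 / (a1 + b1) + b1 / (a1 + b1)) + t * (a2 / (a2 + b2) + b2 / (a2 + b2))"
    by (simp add: algebra_simps)
  also have "\<dots> = 1"
    using assms by (simp flip: add_divide_distrib)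
  finally show ?thesis
    using R_pos unfolding R_def by (simp add: divide_le_eq)
qed

lemma geometric_interpolationE:
  fixes a b y :: real
  assumes "0 < a" "a \<le> y" "y \<le> b"
  obtains t where "0 \<le> t" "t \<le> 1" "y = a powr (1 - t) * b powr t"
proof (cases "a = b")
  case True
  then show ?thesis using assms by (intro that[of 0]) auto
next
  case False
  define t where "t = ln (y / a) / ln (b / a)"
  have "a < b" using False assms by simp
  then have "0 \<le> t" "t \<le> 1"
    using assms unfolding t_def by (auto simp: divide_simps)
  moreover have "a powr (1 - t) * b powr t = y"
  proof -
    have "ln (a powr (1 - t) * b powr t) = ln a + t * ln (b / a)"
      using assms \<open>a < b\<close> by (simp add: ln_mult ln_div algebra_simps)
    also have "\<dots> = ln y"
      using assms \<open>a < b\<close> unfolding t_def by (simp add: ln_div)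
    finally show ?thesis
      using assms by simp
  qed
  ultimately show ?thesis by (intro that) auto
qed

lemma affine_geometric_mean_le:
  fixes c d x1 x2 t :: real
  assumes "0 < c" "0 \<le> d" "0 \<le> x1" "0 \<le> x2" "0 \<le> t" "t \<le> 1"
  shows "c + d * (x1 powr (1 - t) * x2 powr t) \<le> (c + d * x1) powr (1 - t) * (c + d * x2) powr t"
proof -
  have "c = c powr (1 - t) * c powr t"
    using assms by (simp flip: powr_add)
  moreover have "d * (x1 powr (1 - t) * x2 powr t) = (d * x1) powr (1 - t) * (d * x2) powr t"
    using assms by (simp add: powr_mult flip: powr_add)
  ultimately show ?thesis
    using assms by (metis weighted_geometric_mean_superadditive add_pos_nonneg less_imp_le mult_nonneg_nonneg)
qed

lemma admissible_r_bounds: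
  fixes \<theta> r :: real
  assumes "1 < \<theta>" "1 / \<theta> < r" "r \<le> \<theta> powr (-1/2)"
  shows "0 < r" "r < 1" "1 < r * \<theta>" "r\<^sup>2 * \<theta> \<le> 1"
proof -
  have "0 < 1 / \<theta>"
    using assms(1) by simp
  then show r_pos: "0 < r"
    using assms(2) by linarith
  show "1 < r * \<theta>"
    using assms(1,2) by (simp add: divide_less_eq mult.commute)
  have "r\<^sup>2 \<le> (\<theta> powr (-1/2))\<^sup>2"
    using r_pos assms(3) by (intro power_mono) auto
  also have "\<dots> = 1 / \<theta>"
    using assms(1) by (simp add: power2_eq_square powr_minus_divide flip: powr_add)
  finally show r2: "r\<^sup>2 * \<theta> \<le> 1"
    using assms(1) by (simp add: field_simps)
  show "r < 1"
  proof (rule ccontr)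
    assume "\<not> r < 1"
    then have "1 * 1 < r * (r * \<theta>)"
      using \<open>1 < r * \<theta>\<close> by (intro mult_le_less_imp_less) auto
    then show False
      using r2 by (simp add: power2_eq_square mult.assoc)
  qed
qed

lemma ln_le_max_exponent:
  fixes \<theta> a :: real
  assumes "1 < a"
  shows "ln \<theta> \<le> (2 + max 1 (ln \<theta> / ln a - 2)) * ln a"
proof -
  have "ln \<theta> / ln a \<le> 2 + max 1 (ln \<theta> / ln a - 2)"
    by simp
  then show ?thesis
    using assms by (simp add: divide_le_eq)
qed

lemma phi_r_at_threshold:
  fixes \<theta> r :: real
  assumes "0 < r" "r < 1" "1 < r * \<theta>"
  shows "phi_r \<theta> r (r * \<theta>) = r * \<theta>"
proof -
  have "1 - r \<noteq> 0" "0 < \<theta>"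
    using assms by (auto simp: zero_less_mult_iff dest: less_trans[OF zero_less_one])
  then show ?thesis
    using assms unfolding phi_r_def by (simp add: divide_simps) (simp add: power2_eq_square algebra_simps)
qed

lemma phi_r_at_max:
  fixes \<theta> r :: real
  assumes "0 < r" "r < 1" "1 < r * \<theta>"
  shows "phi_r \<theta> r \<theta> = 1 / r"
proof -
  have "1 - r \<noteq> 0" "0 < \<theta>"
    using assms by (auto simp: zero_less_mult_iff dest: less_trans[OF zero_less_one])
  then show ?thesis
    using assms unfolding phi_r_def by (simp add: divide_simps) (simp add: power2_eq_square algebra_simps)
qed

lemma phi_r_mono:
  fixes \<theta> r :: real
  assumes "r < 1" "0 < r * \<theta>" "r\<^sup>2 * \<theta> \<le> 1" "z \<le> z'"
  shows "phi_r \<theta> r z \<le> phi_r \<theta> r z'"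
  using assms unfolding phi_r_def by (intro add_left_mono mult_left_mono divide_right_mono) auto

lemma phi_r_geometric_mean_le:
  fixes \<theta> r t :: real
  assumes r: "0 < r" "r < 1" "1 < r * \<theta>" "r\<^sup>2 * \<theta> \<le> 1"
    and t: "0 \<le> t" "t \<le> 1"
  shows "phi_r \<theta> r ((r * \<theta>) powr (1 - t) * \<theta> powr t) \<le> (r * \<theta>) powr (1 - t) * (1 / r) powr t"
proof -
  define c d where "c = (r * \<theta> - 1) / (1 - r)" and "d = (1 - r\<^sup>2 * \<theta>) / ((1 - r) * (r * \<theta>))"
  have affine: "phi_r \<theta> r z = c + d * z" for z
    unfolding phi_r_def c_def d_def by simp
  have "0 < \<theta>" "0 < c" "0 \<le> d"
    using r unfolding c_def d_def by (auto simp: zero_less_mult_iff dest: less_trans[OF zero_less_one])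
  then have "c + d * ((r * \<theta>) powr (1 - t) * \<theta> powr t)
      \<le> (c + d * (r * \<theta>)) powr (1 - t) * (c + d * \<theta>) powr t"
    using r t by (intro affine_geometric_mean_le) auto
  then show ?thesis
    using phi_r_at_threshold[OF r(1-3)] phi_r_at_max[OF r(1-3)] unfolding affine by simp
qed

lemma phi_r_powr_le:
  fixes \<theta> r s y :: real
  assumes r: "0 < r" "r < 1" "1 < r * \<theta>" "r\<^sup>2 * \<theta> \<le> 1"
    and y: "r * \<theta> \<le> y" "y \<le> \<theta>"
    and s: "0 \<le> s" "ln \<theta> \<le> (2 + s) * ln (r * \<theta>)"
  shows "phi_r \<theta> r y powr (1 + s) \<le> r * \<theta> * y powr s"
proof -
  define a where "a = r * \<theta>"
  have a: "1 < a" "0 < y" "0 < \<theta>"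
    using r y unfolding a_def by auto
  obtain t where t: "0 \<le> t" "t \<le> 1" and y_eq: "y = a powr (1 - t) * \<theta> powr t"
    using geometric_interpolationE[of a y \<theta>] a y unfolding a_def by auto
  have "a \<le> phi_r \<theta> r y"
    using phi_r_mono[of r \<theta> a y] phi_r_at_threshold[OF r(1-3)] r y unfolding a_def by simp
  then have "phi_r \<theta> r y powr (1 + s) \<le> (a powr (1 - t) * (1 / r) powr t) powr (1 + s)"
    using phi_r_geometric_mean_le[OF r t] a s unfolding y_eq a_def by (intro powr_mono2) auto
  also have "\<dots> \<le> a * y powr s"
  proof -
    have "ln ((a powr (1 - t) * (1 / r) powr t) powr (1 + s))
        = (1 + s) * ((1 - t) * ln a + t * (ln \<theta> - ln a))"
      using r a unfolding a_def by (simp add: ln_mult ln_div)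
    also have "\<dots> \<le> ln a + s * ((1 - t) * ln a + t * ln \<theta>)"
    proof -
      have "ln a + s * ((1 - t) * ln a + t * ln \<theta>) - (1 + s) * ((1 - t) * ln a + t * (ln \<theta> - ln a))
          = t * ((2 + s) * ln a - ln \<theta>)"
        by (simp add: algebra_simps)
      also have "\<dots> \<ge> 0"
        using s t unfolding a_def by simp
      finally show ?thesis by simp
    qed
    also have "\<dots> = ln (a * y powr s)"
      using a unfolding y_eq by (simp add: ln_mult)
    finally show ?thesis
      using r a by (subst (asm) ln_le_cancel_iff) auto
  qed
  finally show ?thesis
    unfolding a_def .
qed

lemma Eff_bounds:
  fixes p y :: real
  assumes "0 < p" "0 < y"
  shows "0 < Eff p y" "Eff p y \<le> 1" "Eff p y \<le> p / y" "Eff p y \<le> y / p"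
  using assms unfolding Eff_def min_le_iff_disj by (cases "p \<le> y"; simp)+

lemma Eff_powr_bounds:
  fixes p y s :: real
  assumes "0 < p" "0 < y" "0 \<le> s"
  shows "Eff p y powr s \<in> {0..1}"
  using Eff_bounds[OF assms(1,2)] assms(3) by (auto intro: powr_le1)

lemma le_mult_Phi1:
  fixes \<theta> r y :: real
  assumes "0 < r" "r < 1" "1 < r * \<theta>" "y \<le> \<theta>"
  shows "y \<le> r * \<theta> * Phi1 \<theta> r y"
proof -
  have "\<theta> \<noteq> 0" "1 - r \<noteq> 0"
    using assms by auto
  then have "r * \<theta> * phi_r \<theta> r y - y = r * (r * \<theta> - 1) * (\<theta> - y) / (1 - r)"
    using assms unfolding phi_r_def by (simp add: divide_simps) (simp add: power2_eq_square algebra_simps)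
  also have "\<dots> \<ge> 0"
    using assms by simp
  finally have "y \<le> r * \<theta> * phi_r \<theta> r y"
    by simp
  also have "\<dots> \<le> r * \<theta> * Phi1 \<theta> r y"
    using assms unfolding Phi1_def by (intro mult_left_mono) auto
  finally show ?thesis .
qed

lemma competitive_ratio_pointwise:
  fixes \<theta> r s p y pay :: real
  assumes r: "0 < r" "r < 1" "1 < r * \<theta>" "r\<^sup>2 * \<theta> \<le> 1"
    and s: "1 \<le> s" "ln \<theta> \<le> (2 + s) * ln (r * \<theta>)"
    and p: "0 < p" and y: "0 < y" "y \<le> \<theta>"
    and pay: "1 \<le> pay" "Phi1 \<theta> r y \<le> p \<Longrightarrow> Phi1 \<theta> r y \<le> pay"
  shows "p * Eff p y powr s \<le> r * \<theta> * pay"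
proof -
  define E where "E = Eff p y"
  note E = Eff_bounds[OF p y(1), folded E_def]
  have "E powr s \<le> E"
    using E s by (intro powr_le_one_le) auto
  then have Es: "p * E powr s \<le> p * E" "p * E powr s \<le> p"
    using E p by (simp_all add: mult_left_le)
  have pay_ge: "r * \<theta> \<le> r * \<theta> * pay"
    using mult_left_mono[OF pay(1), of "r * \<theta>"] r by simp
  consider (accepted) "Phi1 \<theta> r y \<le> p" | (low) "p \<le> r * \<theta>"
    | (high) "r * \<theta> < p" "p < phi_r \<theta> r y"
    unfolding Phi1_def by linarith
  then show ?thesis
  proof cases
    case accepted
    have "p * E \<le> y"
      using E p by (simp add: field_simps)
    also have "\<dots> \<le> r * \<theta> * Phi1 \<theta> r y"
      using le_mult_Phi1 r y by simp
    also have "\<dots> \<le> r * \<theta> * pay"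
      using pay(2)[OF accepted] r by (intro mult_left_mono) auto
    finally show ?thesis
      using Es unfolding E_def by simp
  next
    case low
    then show ?thesis
      using Es pay_ge unfolding E_def by linarith
  next
    case high
    have "\<not> y \<le> r * \<theta>"
      using phi_r_mono[of r \<theta> y "r * \<theta>"] phi_r_at_threshold[of r \<theta>] high r by auto
    then have phi_bound: "phi_r \<theta> r y powr (1 + s) \<le> r * \<theta> * y powr s"
      using phi_r_powr_le r s y by simp
    have "p * E powr s \<le> p * (p / y) powr s"
      using E p s by (intro mult_left_mono powr_mono2) auto
    also have "\<dots> = p powr (1 + s) / y powr s"
      using p y by (simp add: powr_add powr_divide)
    also have "\<dots> \<le> phi_r \<theta> r y powr (1 + s) / y powr s"
      using p y high s by (intro divide_right_mono powr_mono2) auto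
    also have "\<dots> \<le> r * \<theta>"
      using phi_bound y by (simp add: divide_le_eq)
    also have "\<dots> \<le> r * \<theta> * pay"
      by (fact pay_ge)
    finally show ?thesis
      unfolding E_def .
  qed
qed

lemma A1_Nil [simp]: "A1 \<theta> r y [] = 1"
  by (simp add: A1_def)

lemma A1_Cons [simp]: "A1 \<theta> r y (p # ps) = (if Phi1 \<theta> r y \<le> p then p else A1 \<theta> r y ps)"
  by (simp add: A1_def)

lemma A1_mem_insert_one: "A1 \<theta> r y ps \<in> insert 1 (set ps)"
  by (induction ps) auto

lemma Phi1_le_A1:
  assumes "p \<in> set ps" "Phi1 \<theta> r y \<le> p"
  shows "Phi1 \<theta> r y \<le> A1 \<theta> r y ps"
  using assms by (induction ps) auto

lemma borel_measurable_A1: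
  assumes [measurable]: "Y \<in> borel_measurable M"
    and "\<And>i. i \<in> set is \<Longrightarrow> P i \<in> borel_measurable M"
  shows "(\<lambda>\<omega>. A1 \<theta> r (Y \<omega>) (map (\<lambda>i. P i \<omega>) is)) \<in> borel_measurable M"
  using assms(2)
proof (induction "is")
  case Nil
  then show ?case by simp
next
  case (Cons i "is")
  have [measurable]: "P i \<in> borel_measurable M"
    "(\<lambda>\<omega>. A1 \<theta> r (Y \<omega>) (map (\<lambda>i. P i \<omega>) is)) \<in> borel_measurable M"
    using Cons by auto
  show ?case
    unfolding list.map A1_Cons Phi1_def phi_r_def by measurable
qed

lemma offered_price_Eff_powr_le_A1:
  fixes \<theta> r s p y :: real
  assumes r: "0 < r" "r < 1" "1 < r * \<theta>" "r\<^sup>2 * \<theta> \<le> 1"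
    and s: "1 \<le> s" "ln \<theta> \<le> (2 + s) * ln (r * \<theta>)"
    and offered: "p \<in> set ps" "\<forall>q \<in> set ps. 1 \<le> q"
    and y: "0 < y" "y \<le> \<theta>"
  shows "p * Eff p y powr s \<le> r * \<theta> * A1 \<theta> r y ps"
proof (rule competitive_ratio_pointwise[OF r s _ y])
  show "0 < p"
    using offered by auto
  show "1 \<le> A1 \<theta> r y ps"
    using A1_mem_insert_one[of \<theta> r y ps] offered(2) by auto
  show "Phi1 \<theta> r y \<le> A1 \<theta> r y ps" if "Phi1 \<theta> r y \<le> p"
    using Phi1_le_A1[OF offered(1) that] .
qed

lemma (in finite_measure) integrable_real_bounded:
  fixes f :: "'a \<Rightarrow> real"
  assumes "f \<in> borel_measurable M" "\<And>x. x \<in> space M \<Longrightarrow> f x \<in> {a..b}"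
  shows "integrable M f"
proof (rule integrable_const_bound[where B = "max \<bar>a\<bar> \<bar>b\<bar>"])
  show "AE x in M. norm (f x) \<le> max \<bar>a\<bar> \<bar>b\<bar>"
  proof (rule AE_I2)
    fix x
    assume "x \<in> space M"
    then have "a \<le> f x" "f x \<le> b"
      using assms(2) by auto
    then show "norm (f x) \<le> max \<bar>a\<bar> \<bar>b\<bar>"
      by auto
  qed
qed (fact assms(1))

lemma (in finite_measure) integrable_A1:
  assumes "Y \<in> borel_measurable M" "\<And>i. i \<in> set is \<Longrightarrow> P i \<in> borel_measurable M"
    and "\<And>i \<omega>. i \<in> set is \<Longrightarrow> \<omega> \<in> space M \<Longrightarrow> P i \<omega> \<in> {1..b}" "1 \<le> b"
  shows "integrable M (\<lambda>\<omega>. A1 \<theta> r (Y \<omega>) (map (\<lambda>i. P i \<omega>) is))"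
proof (rule integrable_real_bounded)
  show "(\<lambda>\<omega>. A1 \<theta> r (Y \<omega>) (map (\<lambda>i. P i \<omega>) is)) \<in> borel_measurable M"
    using assms(1,2) by (rule borel_measurable_A1)
  show "A1 \<theta> r (Y \<omega>) (map (\<lambda>i. P i \<omega>) is) \<in> {1..b}" if "\<omega> \<in> space M" for \<omega>
    using A1_mem_insert_one[of \<theta> r "Y \<omega>" "map (\<lambda>i. P i \<omega>) is"] assms(3,4) that by auto
qed

lemma (in finite_measure) integrable_Eff_powr:
  assumes "Y \<in> borel_measurable M" "\<And>\<omega>. \<omega> \<in> space M \<Longrightarrow> 0 < Y \<omega>" "0 < p" "0 \<le> s"
  shows "integrable M (\<lambda>\<omega>. Eff p (Y \<omega>) powr s)"
proof (rule integrable_real_bounded)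
  show "(\<lambda>\<omega>. Eff p (Y \<omega>) powr s) \<in> borel_measurable M"
    unfolding Eff_def using assms(1) by measurable
  show "Eff p (Y \<omega>) powr s \<in> {0..1}" if "\<omega> \<in> space M" for \<omega>
    using Eff_powr_bounds[OF assms(3) assms(2)[OF that] assms(4)] .
qed

theorem corollary1:
  fixes M :: "'a measure" and \<theta> r p_star :: real and n :: nat
    and P :: "nat \<Rightarrow> 'a \<Rightarrow> real" and Y :: "'a \<Rightarrow> real"
  assumes "prob_space M"
    and "\<theta> > 1"
    and "1/\<theta> < r" and "r \<le> \<theta> powr (-1/2)"
    and "n \<ge> 1"
    and "\<And>i. i < n \<Longrightarrow> P i \<in> borel_measurable M"
    and "\<And>i \<omega>. i < n \<Longrightarrow> \<omega> \<in> space M \<Longrightarrow> P i \<omega> \<in> {1..\<theta>}"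
    and "Y \<in> borel_measurable M"
    and "\<And>\<omega>. \<omega> \<in> space M \<Longrightarrow> Y \<omega> \<in> {1..\<theta>}"
    and "p_star \<in> {1..\<theta>}"
    and "AE \<omega> in M. (MAX i\<in>{..<n}. P i \<omega>) = p_star"
  shows "(\<integral>\<omega>. A1 \<theta> r (Y \<omega>) (map (\<lambda>i. P i \<omega>) [0..<n]) \<partial>M)
           / (\<integral>\<omega>. (MAX i\<in>{..<n}. P i \<omega>) \<partial>M)
         \<ge> 1/(r*\<theta>) * (\<integral>\<omega>. Eff p_star (Y \<omega>) powr (max 1 (ln \<theta> / ln (r*\<theta>) - 2)) \<partial>M)"
proof -
  interpret prob_space M by fact
  note r = admissible_r_bounds[OF assms(2-4)]
  define s where "s = max 1 (ln \<theta> / ln (r * \<theta>) - 2)"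
  define A where "A \<omega> = A1 \<theta> r (Y \<omega>) (map (\<lambda>i. P i \<omega>) [0..<n])" for \<omega>
  define F where "F \<omega> = Eff p_star (Y \<omega>) powr s" for \<omega>
  have s: "1 \<le> s" "ln \<theta> \<le> (2 + s) * ln (r * \<theta>)"
    using ln_le_max_exponent[of "r * \<theta>" \<theta>] r unfolding s_def by auto
  have "AE \<omega> in M. p_star * F \<omega> \<le> r * \<theta> * A \<omega>"
    using assms(11) AE_space
  proof eventually_elim
    case (elim \<omega>)
    have "p_star \<in> (\<lambda>i. P i \<omega>) ` {..<n}"
      using Max_in[of "(\<lambda>i. P i \<omega>) ` {..<n}"] elim(1) assms(5) by (simp add: lessThan_empty_iff)
    then have "p_star \<in> set (map (\<lambda>i. P i \<omega>) [0..<n])"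
      by auto
    moreover have "\<forall>q \<in> set (map (\<lambda>i. P i \<omega>) [0..<n]). 1 \<le> q" "0 < Y \<omega>" "Y \<omega> \<le> \<theta>"
      using assms(7,9) elim(2) by fastforce+
    ultimately show ?case
      unfolding A_def F_def by (rule offered_price_Eff_powr_le_A1[OF r s])
  qed
  moreover have "integrable M A"
    unfolding A_def using assms(2,6-8) by (intro integrable_A1) auto
  moreover have "integrable M F"
    unfolding F_def using assms(8-10) s(1) by (intro integrable_Eff_powr) force+
  ultimately have "integral\<^sup>L M (\<lambda>\<omega>. p_star * F \<omega>) \<le> integral\<^sup>L M (\<lambda>\<omega>. r * \<theta> * A \<omega>)"
    by (intro integral_mono_AE) auto
  moreover have "integral\<^sup>L M (\<lambda>\<omega>. MAX i\<in>{..<n}. P i \<omega>) = integral\<^sup>L M (\<lambda>_. p_star)"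
    using assms(6,11) by (intro integral_cong_AE) auto
  ultimately show ?thesis
    using r assms(10) unfolding A_def F_def s_def by (simp add: prob_space field_simps)
qed

end
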